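(* Let $\Gamma_2$ be a finite alphabet and $n\in\mathbb N$. There is a pushdown automaton with $3n+3$ states and stack alphabet consisting of two symbols, in whose runs the stack height never exceeds $n$, whose language is exactly $(\Gamma_2)^{2^{n+1}}$.
   Context: A pushdown automaton has transitions labelled by a letter or $\epsilon$ and a stack operation (push a symbol, pop a symbol, or no operation); it accepts a word if there is a run from the initial state with empty stack reading the word and ending in a final state with empty stack. *)

theory Defs
  imports Main
begin

datatype 's stack_op = Push 's | Pop 's | NoOp

record ('q, 'a, 's) pda =
  states :: "'q set"
  input :: "'a set"
  stack_alph :: "'s set"
  trans :: "('q \<times> 'a option \<times> 's stack_op \<times> 'q) set"
  init :: 'q
  final :: "'q set"

definition wf_pda :: "('q, 'a, 's) pda \<Rightarrow> bool" where
  "wf_pda A \<longleftrightarrow> finite (states A) \<and> finite (input A) \<and> finite (stack_alph A) \<and>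
     finite (trans A) \<and> init A \<in> states A \<and> final A \<subseteq> states A \<and>
     (\<forall>(p, l, op, q) \<in> trans A. p \<in> states A \<and> q \<in> states A \<and>
        (\<forall>a. l = Some a \<longrightarrow> a \<in> input A) \<and>
        (\<forall>z. op = Push z \<longrightarrow> z \<in> stack_alph A) \<and>
        (\<forall>z. op = Pop z \<longrightarrow> z \<in> stack_alph A))"

fun apply_op :: "'s stack_op \<Rightarrow> 's list \<Rightarrow> 's list \<Rightarrow> bool" where
  "apply_op (Push z) w w' \<longleftrightarrow> w' = z # w"
| "apply_op (Pop z) w w' \<longleftrightarrow> w = z # w'"
| "apply_op NoOp w w' \<longleftrightarrow> w' = w"

text \<open>One step between configurations (state, stack; top of stack = head), reading
  the word given (empty for epsilon).\<close>
definition step :: "('q, 'a, 's) pda \<Rightarrow> 'q \<times> 's list \<Rightarrow> 'a list \<Rightarrow> 'q \<times> 's list \<Rightarrow> bool" where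
  "step A c u c' \<longleftrightarrow> (\<exists>l op. (fst c, l, op, fst c') \<in> trans A \<and>
      u = (case l of None \<Rightarrow> [] | Some a \<Rightarrow> [a]) \<and> apply_op op (snd c) (snd c'))"

inductive run :: "('q, 'a, 's) pda \<Rightarrow> 'q \<times> 's list \<Rightarrow> 'a list \<Rightarrow> 'q \<times> 's list \<Rightarrow> bool"
  for A where
  run_refl: "run A c [] c"
| run_step: "run A c w c' \<Longrightarrow> step A c' u c'' \<Longrightarrow> run A c (w @ u) c''"

definition lang :: "('q, 'a, 's) pda \<Rightarrow> 'a list set" where
  "lang A = {w. \<exists>q \<in> final A. run A (init A, []) w (q, [])}"

definition stack_bounded :: "('q, 'a, 's) pda \<Rightarrow> nat \<Rightarrow> bool" where
  "stack_bounded A n \<longleftrightarrow> (\<forall>w c. run A (init A, []) w c \<longrightarrow> length (snd c) \<le> n)"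

end

theory Submission
  imports Defs
begin

text \<open>State \<open>3 * k + r\<close> (\<open>r < 3\<close>) is phase \<open>r\<close> of a procedure of level \<open>k\<close> that reads
  \<open>2 ^ (k + 1)\<close> letters: level \<open>0\<close> reads two letters, and level \<open>k + 1\<close> calls level \<open>k\<close> twice,
  pushing the return address (\<open>0\<close> for the first call, \<open>1\<close> for the second) on the stack.
  So in level \<open>k\<close> the stack has height \<open>n - k\<close>, and a configuration in phase \<open>r\<close> of level
  \<open>k\<close> whose stack, read as a binary number with the top as least significant bit, is \<open>b\<close> has
  consumed \<open>2 ^ k * (r + 2 * b)\<close> letters. This potential grows by exactly the length of the
  input read in every step, whence accepted words have length \<open>2 ^ (n + 1)\<close>.\<close>

lemma run_single: "step A c u c' \<Longrightarrow> run A c u c'"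
  using run.run_step[OF run.run_refl, of A c u c'] by simp

lemma run_append:
  assumes "run A c w c'" and "run A c' v c''"
  shows "run A c (w @ v) c''"
  using assms(2,1)
proof (induction rule: run.induct)
  case (run_step c1 w1 c2 u c3)
  then show ?case using run.run_step[of A c "w @ w1" c2 u c3] by simp
qed simp

lemma run_enclosed_by_eps:
  assumes "step A c [] c1" and "run A c1 w c2" and "step A c2 [] c'"
  shows "run A c w c'"
  using run_append[OF run_append[OF run_single[OF assms(1)] assms(2)] run_single[OF assms(3)]]
  by simp

lemma step_read: "(p, Some a, NoOp, q) \<in> trans A \<Longrightarrow> step A (p, s) [a] (q, s)"
  unfolding step_def by force

lemma step_eps: "(p, None, op, q) \<in> trans A \<Longrightarrow> apply_op op s s' \<Longrightarrow> step A (p, s) [] (q, s')"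
  unfolding step_def by force

lemma run_word_in_input:
  assumes "wf_pda A"
  shows "run A c w c' \<Longrightarrow> set w \<subseteq> input A"
proof (induction rule: run.induct)
  case (run_step c w c' u c'')
  then obtain l op where "(fst c', l, op, fst c'') \<in> trans A"
    and "u = (case l of None \<Rightarrow> [] | Some a \<Rightarrow> [a])"
    unfolding step_def by blast
  with assms run_step.IH show ?case
    unfolding wf_pda_def by (cases l) fastforce+
qed simp

lemma run_potential:
  assumes "\<And>c u c'. P c \<Longrightarrow> step A c u c' \<Longrightarrow> P c' \<and> f c' = f c + length u"
  shows "run A c w c' \<Longrightarrow> P c \<Longrightarrow> P c' \<and> f c' = f c + length w"
  by (induction rule: run.induct) (use assms in fastforce)+

definition state :: "nat \<Rightarrow> nat \<Rightarrow> nat" where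
  "state k r = 3 * k + r"

lemma state_div_3 [simp]: "r < 3 \<Longrightarrow> state k r div 3 = k"
  and state_mod_3 [simp]: "r < 3 \<Longrightarrow> state k r mod 3 = r"
  by (simp_all add: state_def)

definition doubling_trans :: "'a set \<Rightarrow> nat \<Rightarrow> (nat \<times> 'a option \<times> nat stack_op \<times> nat) set" where
  "doubling_trans G n =
       (\<lambda>a. (state 0 0, Some a, NoOp, state 0 1)) ` G
     \<union> (\<lambda>a. (state 0 1, Some a, NoOp, state 0 2)) ` G
     \<union> (\<lambda>k. (state (k + 1) 0, None, Push 0, state k 0)) ` {..<n}
     \<union> (\<lambda>k. (state k 2, None, Pop 0, state (k + 1) 1)) ` {..<n}
     \<union> (\<lambda>k. (state (k + 1) 1, None, Push 1, state k 0)) ` {..<n}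
     \<union> (\<lambda>k. (state k 2, None, Pop 1, state (k + 1) 2)) ` {..<n}"

definition doubling_pda :: "'a set \<Rightarrow> nat \<Rightarrow> (nat, 'a, nat) pda" where
  "doubling_pda G n =
     \<lparr>states = {..<3 * n + 3}, input = G, stack_alph = {0, 1}, trans = doubling_trans G n,
      init = state n 0, final = {state n 2}\<rparr>"

lemma wf_doubling_pda: "finite G \<Longrightarrow> wf_pda (doubling_pda G n)"
  unfolding wf_pda_def doubling_pda_def doubling_trans_def by (auto simp: state_def)

fun binary_value :: "nat list \<Rightarrow> nat" where
  "binary_value [] = 0"
| "binary_value (b # s) = b + 2 * binary_value s"

definition progress :: "nat \<times> nat list \<Rightarrow> nat" where
  "progress c = 2 ^ (fst c div 3) * (fst c mod 3 + 2 * binary_value (snd c))"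

definition level_consistent :: "nat \<Rightarrow> nat \<times> nat list \<Rightarrow> bool" where
  "level_consistent n c \<longleftrightarrow> fst c div 3 \<le> n \<and> length (snd c) = n - fst c div 3"

lemma doubling_step_progress:
  assumes "level_consistent n c" and "step (doubling_pda G n) c u c'"
  shows "level_consistent n c' \<and> progress c' = progress c + length u"
proof -
  obtain q s q' s' where c: "c = (q, s)" and c': "c' = (q', s')" by fastforce
  from assms(2) obtain l op where tr: "(q, l, op, q') \<in> doubling_trans G n"
    and u: "u = (case l of None \<Rightarrow> [] | Some a \<Rightarrow> [a])" and op: "apply_op op s s'"
    unfolding step_def doubling_pda_def c c' by auto
  from tr show ?thesis
    unfolding doubling_trans_def
    using assms(1) u op by (elim UnE imageE) (auto simp: c c' level_consistent_def progress_def)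
qed

lemma doubling_run_progress:
  assumes "run (doubling_pda G n) (state n 0, []) w c"
  shows "level_consistent n c \<and> progress c = length w"
proof -
  have "level_consistent n (state n 0, [])" and "progress (state n 0, []) = 0"
    by (simp_all add: level_consistent_def progress_def)
  then show ?thesis
    using run_potential[where P = "level_consistent n" and f = progress,
        OF doubling_step_progress assms]
    by simp
qed

lemma doubling_run_level:
  assumes "k \<le> n" "set w \<subseteq> G" "length w = 2 ^ (k + 1)"
  shows "run (doubling_pda G n) (state k 0, s) w (state k 2, s)"
  using assms
proof (induction k arbitrary: s w)
  case 0
  then obtain a b where w: "w = [a, b]"
    by (cases w; cases "tl w") (auto simp: numeral_2_eq_2)
  have "step (doubling_pda G n) (state 0 0, s) [a] (state 0 1, s)"
    and "step (doubling_pda G n) (state 0 1, s) [b] (state 0 2, s)"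
    using 0 w by (auto intro!: step_read simp: doubling_pda_def doubling_trans_def)
  from run_append[OF this[THEN run_single]] show ?case
    using w by simp
next
  case (Suc k)
  let ?A = "doubling_pda G n"
  define w1 w2 where "w1 = take (2 ^ (k + 1)) w" and "w2 = drop (2 ^ (k + 1)) w"
  have "length w1 = 2 ^ (k + 1)" "length w2 = 2 ^ (k + 1)" "set w1 \<subseteq> G" "set w2 \<subseteq> G"
    using Suc.prems set_take_subset set_drop_subset unfolding w1_def w2_def by fastforce+
  moreover have "k < n" using Suc.prems by simp
  ultimately have first_call: "run ?A (state k 0, 0 # s) w1 (state k 2, 0 # s)"
    and second_call: "run ?A (state k 0, 1 # s) w2 (state k 2, 1 # s)"
    using Suc.IH by simp_all
  have "step ?A (state (Suc k) 0, s) [] (state k 0, 0 # s)"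
    and "step ?A (state k 2, 0 # s) [] (state (Suc k) 1, s)"
    and "step ?A (state (Suc k) 1, s) [] (state k 0, 1 # s)"
    and "step ?A (state k 2, 1 # s) [] (state (Suc k) 2, s)"
    using \<open>k < n\<close> by (auto intro!: step_eps simp: doubling_pda_def doubling_trans_def)
  with first_call second_call
  have "run ?A (state (Suc k) 0, s) (w1 @ w2) (state (Suc k) 2, s)"
    by (blast intro: run_append run_enclosed_by_eps)
  then show ?case unfolding w1_def w2_def by simp
qed

theorem claim4p6:
  fixes \<Gamma> :: "'a set" and n :: nat
  assumes "finite \<Gamma>"
  shows "\<exists>A :: (nat, 'a, nat) pda.
           wf_pda A \<and> input A = \<Gamma> \<and>
           card (states A) = 3 * n + 3 \<and> card (stack_alph A) = 2 \<and>
           stack_bounded A n \<and>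
           lang A = {w. set w \<subseteq> \<Gamma> \<and> length w = 2 ^ (n + 1)}"
proof (intro exI[of _ "doubling_pda \<Gamma> n"] conjI)
  let ?A = "doubling_pda \<Gamma> n"
  show wf: "wf_pda ?A" using assms by (rule wf_doubling_pda)
  show "input ?A = \<Gamma>" "card (states ?A) = 3 * n + 3" "card (stack_alph ?A) = 2"
    by (simp_all add: doubling_pda_def)
  show "stack_bounded ?A n"
    using doubling_run_progress
    by (fastforce simp: stack_bounded_def doubling_pda_def level_consistent_def)
  have "w \<in> lang ?A \<longleftrightarrow> set w \<subseteq> \<Gamma> \<and> length w = 2 ^ (n + 1)" for w
  proof
    assume "w \<in> lang ?A"
    then have run: "run ?A (state n 0, []) w (state n 2, [])"
      by (simp add: lang_def doubling_pda_def)
    show "set w \<subseteq> \<Gamma> \<and> length w = 2 ^ (n + 1)"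
      using run_word_in_input[OF wf run] doubling_run_progress[OF run]
      by (simp add: doubling_pda_def progress_def)
  next
    assume "set w \<subseteq> \<Gamma> \<and> length w = 2 ^ (n + 1)"
    then show "w \<in> lang ?A"
      using doubling_run_level[of n n w \<Gamma> "[]"] by (auto simp: lang_def doubling_pda_def)
  qed
  then show "lang ?A = {w. set w \<subseteq> \<Gamma> \<and> length w = 2 ^ (n + 1)}" by blast
qed

end
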